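(* For every integer $\mathfrak{q}>2$ and every $\mathfrak{p}\in\{1,2,\dots,\mathfrak{q}-1\}$ coprime with $\mathfrak{q}$, there exists a unique $\mathfrak{q}$-periodic sequence $\mathbf{s}\in\{\mathbf A,\mathbf B\}^{\mathbb{Z}}$ such that: $\mathbf{s}[0]=\mathbf A$ and $\mathbf{s}[-1]=\mathbf B$; for every $j\in\mathbb{Z}$ with $(j\bmod\mathfrak{q})\notin\{-\mathfrak{p}\bmod\mathfrak{q},\,-\mathfrak{p}-1\bmod\mathfrak{q}\}$ we have $\mathbf{s}[j+\mathfrak{p}]=\mathbf{s}[j]$; and $\mathbf{s}[-\mathfrak{p}-1]=\mathbf A$, $\mathbf{s}[-\mathfrak{p}]=\mathbf B$.
   Context: $\mathbf A,\mathbf B$ are two symbols; for a sequence $\mathbf{s}=(a_i)_{i\in\mathbb{Z}}$, $\mathbf{s}[i]$ denotes $a_i$. *)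

theory Defs
  imports Main
begin

datatype sym = SymA | SymB

definition periodic_seq :: "int \<Rightarrow> (int \<Rightarrow> sym) \<Rightarrow> bool" where
  "periodic_seq q s \<longleftrightarrow> (\<forall>i. s (i + q) = s i)"

end

theory Submission
  imports Defs "HOL-Number_Theory.Cong"
begin

text \<open>
  Let \<open>u\<close> be the inverse of \<open>p\<close> modulo \<open>q\<close>. Along the arithmetic progression \<open>j, j + p, j + 2p, \<dots>\<close>
  the residue \<open>j u mod q\<close> increases by one at each step, so the rules \<open>s[j+p] = s[j]\<close> say that
  \<open>s[j]\<close> depends only on which side of the two exceptional residues \<open>q - 1 - u\<close> and \<open>q - 1\<close> the
  residue \<open>j u mod q\<close> lies. This gives the solution \<open>s[j] = A \<longleftrightarrow> j u mod q < q - u\<close>.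
  Uniqueness: two solutions agree at \<open>0\<close> and \<open>-1\<close>, agreement propagates along steps of \<open>p\<close>
  (the exceptional steps land on \<open>0\<close> or \<open>-1\<close> modulo \<open>q\<close>), and since \<open>p\<close> is coprime to \<open>q\<close>
  the multiples of \<open>p\<close> meet every residue class.
\<close>

definition admissible_word :: "int \<Rightarrow> int \<Rightarrow> (int \<Rightarrow> sym) \<Rightarrow> bool" where
  "admissible_word q p s \<longleftrightarrow>
     periodic_seq q s \<and>
     s 0 = SymA \<and> s (-1) = SymB \<and>
     (\<forall>j. j mod q \<notin> {(-p) mod q, (-p-1) mod q} \<longrightarrow> s (j + p) = s j) \<and>
     s (-p-1) = SymA \<and> s (-p) = SymB"

definition rotation_word :: "int \<Rightarrow> int \<Rightarrow> int \<Rightarrow> sym" where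
  "rotation_word q u j = (if (j * u) mod q < q - u then SymA else SymB)"

lemma periodic_seq_add_mult:
  assumes "periodic_seq q s"
  shows "s (i + k * q) = s i"
proof (induction k rule: int_induct[where k = 0])
  case (step1 k)
  have "s (i + (k + 1) * q) = s ((i + k * q) + q)" by (simp add: algebra_simps)
  with step1 assms show ?case by (simp add: periodic_seq_def)
next
  case (step2 k)
  have "s (i + k * q) = s ((i + (k - 1) * q) + q)" by (simp add: algebra_simps)
  with step2 assms show ?case by (simp add: periodic_seq_def)
qed simp

lemma periodic_seq_cong:
  assumes "periodic_seq q s" and "[i = j] (mod q)"
  shows "s i = s j"
proof -
  have "s i = s (i mod q)"
    using periodic_seq_add_mult[OF assms(1), of "i mod q" "i div q"] by simp
  also have "\<dots> = s (j mod q)" using assms(2) by (simp add: cong_def)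
  also have "\<dots> = s j"
    using periodic_seq_add_mult[OF assms(1), of "j mod q" "j div q"] by simp
  finally show ?thesis .
qed

lemma cong_mult_inverse_int:
  fixes p q u j k :: int
  assumes "[p * u = 1] (mod q)" and "[j * u = k] (mod q)"
  shows "[j = k * p] (mod q)"
proof -
  have "[j * (p * u) = j * 1] (mod q)" using assms(1) by (rule cong_scalar_left)
  then have "[j = (j * u) * p] (mod q)" by (simp add: ac_simps cong_sym_eq)
  also have "[(j * u) * p = k * p] (mod q)" using assms(2) by (rule cong_scalar_right)
  finally show ?thesis .
qed

lemma coprime_exists_multiple_cong:
  fixes p q j :: int
  assumes "q > 0" and "coprime p q"
  shows "\<exists>n::nat. [int n * p = j] (mod q)"
proof -
  obtain u where "[p * u = 1] (mod q)"
    using assms coprime_iff_invertible'_int by blast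
  then have "[j = ((j * u) mod q) * p] (mod q)"
    by (rule cong_mult_inverse_int) (simp add: cong_def)
  moreover have "int (nat ((j * u) mod q)) = (j * u) mod q" using assms(1) by simp
  ultimately show ?thesis by (metis cong_sym)
qed

lemma periodic_seq_eq_if_agreement_propagates:
  fixes p q :: int
  assumes "q > 0" and "coprime p q"
    and "periodic_seq q s" and "periodic_seq q t" and "s 0 = t 0"
    and propagate: "\<And>j. s j = t j \<Longrightarrow> s (j + p) = t (j + p)"
  shows "s = t"
proof
  fix j
  have multiples: "s (int n * p) = t (int n * p)" for n :: nat
  proof (induction n)
    case (Suc n)
    then show ?case using propagate[of "int n * p"] by (simp add: algebra_simps)
  qed (simp add: assms(5))
  obtain n :: nat where "[int n * p = j] (mod q)"
    using coprime_exists_multiple_cong[OF assms(1,2)] by blast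
  then show "s j = t j"
    using multiples[of n] periodic_seq_cong[OF assms(3)] periodic_seq_cong[OF assms(4)] by metis
qed

lemma admissible_word_unique:
  assumes "q > 0" and "coprime p q"
    and "admissible_word q p s" and "admissible_word q p t"
  shows "s = t"
proof (rule periodic_seq_eq_if_agreement_propagates[OF assms(1,2)])
  show per: "periodic_seq q s" "periodic_seq q t"
    using assms(3,4) by (simp_all add: admissible_word_def)
  have fixed: "s 0 = t 0" "s (-1) = t (-1)"
    using assms(3,4) by (simp_all add: admissible_word_def)
  then show "s 0 = t 0" by simp
  fix j
  assume agree: "s j = t j"
  consider "[j = -p] (mod q)" | "[j = -p-1] (mod q)"
    | "j mod q \<notin> {(-p) mod q, (-p-1) mod q}"
    by (auto simp: cong_def)
  then show "s (j + p) = t (j + p)"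
  proof cases
    case 1
    then have "[j + p = 0] (mod q)" using cong_add_rcancel[of j p "-p" q] by simp
    with fixed show ?thesis
      using periodic_seq_cong[OF per(1)] periodic_seq_cong[OF per(2)] by simp
  next
    case 2
    then have "[j + p = -1] (mod q)" using cong_add_rcancel[of j p "-p-1" q] by simp
    with fixed show ?thesis
      using periodic_seq_cong[OF per(1)] periodic_seq_cong[OF per(2)] by simp
  next
    case 3
    with assms(3,4) have "s (j + p) = s j" "t (j + p) = t j"
      unfolding admissible_word_def by blast+
    with agree show ?thesis by simp
  qed
qed

lemma periodic_seq_rotation_word: "periodic_seq q (rotation_word q u)"
  by (simp add: periodic_seq_def rotation_word_def distrib_right)

context
  fixes q p u :: int
  assumes q: "q > 1" and u: "0 < u" "u < q" and inverse: "[p * u = 1] (mod q)"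
begin

lemma rotation_residue_step: "((j + p) * u) mod q = ((j * u) mod q + 1) mod q"
proof -
  have "[(j + p) * u = j * u + 1] (mod q)"
    using inverse by (simp add: distrib_right cong_add_lcancel)
  then show ?thesis by (simp add: cong_def mod_add_left_eq)
qed

lemma rotation_residue_cong: "[j = ((j * u) mod q) * p] (mod q)"
  by (rule cong_mult_inverse_int[OF inverse]) (simp add: cong_def)

lemma rotation_residue_top:
  assumes "(j * u) mod q = q - 1"
  shows "[j = -p] (mod q)"
proof -
  have "[j = (q - 1) * p] (mod q)" using rotation_residue_cong[of j] assms by simp
  also have "[(q - 1) * p = -p] (mod q)" by (simp add: cong_iff_dvd_diff algebra_simps)
  finally show ?thesis .
qed

lemma rotation_residue_threshold:
  assumes "(j * u) mod q = q - 1 - u"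
  shows "[j = -p-1] (mod q)"
proof -
  have "[j = (q - 1 - u) * p] (mod q)" using rotation_residue_cong[of j] assms by simp
  also have "[(q - 1 - u) * p = -p - p * u] (mod q)"
    by (simp add: cong_iff_dvd_diff algebra_simps)
  also have "[-p - p * u = -p - 1] (mod q)" using cong_refl inverse by (rule cong_diff)
  finally show ?thesis .
qed

lemma rotation_word_step:
  assumes "j mod q \<notin> {(-p) mod q, (-p-1) mod q}"
  shows "rotation_word q u (j + p) = rotation_word q u j"
proof -
  define r where "r = (j * u) mod q"
  have "r \<noteq> q - 1"
    using rotation_residue_top[of j] assms unfolding r_def cong_def by blast
  moreover have "r \<noteq> q - 1 - u"
    using rotation_residue_threshold[of j] assms unfolding r_def cong_def by blast
  moreover have "0 \<le> r" "r < q" using q by (simp_all add: r_def)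
  ultimately have "((j + p) * u) mod q = r + 1" and "r + 1 < q - u \<longleftrightarrow> r < q - u"
    unfolding rotation_residue_step r_def[symmetric] by auto
  then show ?thesis unfolding rotation_word_def r_def by presburger
qed

lemma admissible_rotation_word: "admissible_word q p (rotation_word q u)"
proof -
  have "[(-p) * u = -1] (mod q)" using inverse by (simp add: cong_minus_minus_iff)
  then have minus_p: "((-p) * u) mod q = q - 1"
    using q by (simp add: cong_def zmod_zminus1_eq_if)
  have "[(p + 1) * u = 1 + u] (mod q)"
    using inverse by (simp add: distrib_right cong_add_rcancel)
  then have "[-((p + 1) * u) = -(1 + u)] (mod q)" by (simp only: cong_minus_minus_iff)
  moreover have "(-p-1) * u = -((p + 1) * u)" by (simp add: algebra_simps)
  ultimately have "[(-p-1) * u = -(1 + u)] (mod q)" by simp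
  also have "[-(1 + u) = q - 1 - u] (mod q)" by (simp add: cong_iff_dvd_diff)
  finally have minus_p_1: "((-p-1) * u) mod q = q - 1 - u"
    using u by (simp add: cong_def)
  have minus_1: "((-1) * u) mod q = q - u"
    using u by (simp add: zmod_zminus1_eq_if)
  show ?thesis
    unfolding admissible_word_def
  proof (intro conjI allI impI)
    show "rotation_word q u (j + p) = rotation_word q u j"
      if "j mod q \<notin> {(-p) mod q, (-p-1) mod q}" for j
      using that by (rule rotation_word_step)
  qed (use u minus_p minus_p_1 minus_1 periodic_seq_rotation_word in
        \<open>simp_all add: rotation_word_def\<close>)
qed

end

theorem lemmaB2:
  fixes q p :: int
  assumes "q > 2" and "1 \<le> p" and "p \<le> q - 1" and "coprime p q"
  shows "\<exists>!s :: int \<Rightarrow> sym.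
           periodic_seq q s \<and>
           s 0 = SymA \<and> s (-1) = SymB \<and>
           (\<forall>j. j mod q \<notin> {(-p) mod q, (-p-1) mod q} \<longrightarrow> s (j + p) = s j) \<and>
           s (-p-1) = SymA \<and> s (-p) = SymB"
proof -
  obtain u where u: "0 \<le> u" "u < q" and inverse: "[p * u = 1] (mod q)"
    using assms(1,4) coprime_iff_invertible'_int[of q p] by auto
  have "u \<noteq> 0" using inverse assms(1) by (auto simp: cong_def)
  then have "admissible_word q p (rotation_word q u)"
    using admissible_rotation_word assms(1) u inverse by simp
  moreover have "s = t" if "admissible_word q p s" "admissible_word q p t" for s t
    using admissible_word_unique[of q p s t] assms(1,4) that by simp
  ultimately have "\<exists>!s. admissible_word q p s" by blast
  then show ?thesis unfolding admissible_word_def .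
qed

end
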